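(* Let $\mathcal{Q}\subset\mathbb{R}^n$ be compact and let $(\mathcal{E},\mathcal{D})$ be a compression code for $\mathcal{Q}$ operating at rate $r$ and distortion $\delta$, with codebook $\mathcal{C}$. Let $A\in\mathbb{R}^{d\times n}$ have i.i.d. $\mathcal{N}(0,1)$ entries. For ${\bf x}_o\in\mathcal{Q}$, let $\hat{{\bf x}}_o$ be the CSP reconstruction from ${\bf y}_o=A{\bf x}_o$, i.e. any $\hat{{\bf x}}_o\in\arg\min_{{\bf c}\in\mathcal{C}}\|{\bf y}_o-A{\bf c}\|_2^2$. Then for arbitrary $\tau_1>0$ and $\tau_2\in(0,1)$, \[ \|\hat{{\bf x}}_o-{\bf x}_o\|_2\le\delta\sqrt{\frac{1+\tau_1}{1-\tau_2}} \] with probability at least \[ 1-2^{r}{\rm e}^{\frac d2(\tau_2+\log(1-\tau_2))}-{\rm e}^{-\frac d2(\tau_1-\log(1+\tau_1))}. \]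
   Context: A compression code $(\mathcal{E},\mathcal{D})$ for $\mathcal{Q}$ at rate $r$ consists of an encoder $\mathcal{E}:\mathcal{Q}\to\{1,2,\dots,2^r\}$ and a decoder $\mathcal{D}:\{1,\dots,2^r\}\to\mathbb{R}^n$; its codebook is $\mathcal{C}=\{\mathcal{D}(\mathcal{E}({\bf x})):{\bf x}\in\mathcal{Q}\}$ (so $|\mathcal{C}|\le2^r$), and its distortion is $\delta=\sup_{{\bf x}\in\mathcal{Q}}\|{\bf x}-\mathcal{D}(\mathcal{E}({\bf x}))\|_2$. $\log$ denotes the natural logarithm. *)

theory Defs
  imports "HOL-Probability.Probability"
begin

text \<open>Law of a d x n matrix with i.i.d. standard Gaussian entries, modelled as the
  product measure over the index set of entries (row, column).\<close>
definition gauss_matrix :: "('d::finite \<times> 'n::finite \<Rightarrow> real) measure" where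
  "gauss_matrix = PiM UNIV (\<lambda>_. density lborel std_normal_density)"

definition mat_of :: "('d::finite \<times> 'n::finite \<Rightarrow> real) \<Rightarrow> real^'n^'d" where
  "mat_of f = (\<chi> i j. f (i, j))"

definition codebook :: "'a set \<Rightarrow> ('a \<Rightarrow> nat) \<Rightarrow> (nat \<Rightarrow> 'b) \<Rightarrow> 'b set" where
  "codebook Q E D = (\<lambda>x. D (E x)) ` Q"

definition distortion :: "('a::real_normed_vector) set \<Rightarrow> ('a \<Rightarrow> nat) \<Rightarrow> (nat \<Rightarrow> 'a) \<Rightarrow> real" where
  "distortion Q E D = (SUP x\<in>Q. norm (x - D (E x)))"

definition csp_minimizer :: "real^'n^'d \<Rightarrow> real^'d \<Rightarrow> (real^'n) set \<Rightarrow> real^'n \<Rightarrow> bool" where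
  "csp_minimizer A y C c \<longleftrightarrow> c \<in> C \<and> (\<forall>c'\<in>C. (norm (y - A *v c))\<^sup>2 \<le> (norm (y - A *v c'))\<^sup>2)"

end

theory Submission
  imports Defs
begin

text \<open>For fixed \<open>v\<close> the coordinates of \<open>A v\<close> are independent \<open>N(0, \<parallel>v\<parallel>\<^sup>2)\<close>, so
  \<open>\<parallel>A v\<parallel>\<^sup>2 / \<parallel>v\<parallel>\<^sup>2\<close> is chi-squared with \<open>d\<close> degrees of freedom and has moment generating
  function \<open>(1 - 2 t) powr (- d / 2)\<close>. Chernoff's bound then shows that \<open>A\<close> stretches the single
  vector \<open>D (E x\<^sub>o) - x\<^sub>o\<close> by more than \<open>(1 + \<tau>\<^sub>1) d\<close> only with probability
  \<open>exp (- d / 2 * (\<tau>\<^sub>1 - ln (1 + \<tau>\<^sub>1)))\<close>, and, by a union bound over the at most \<open>2 ^ r\<close> codewords,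
  that it shrinks some \<open>c - x\<^sub>o\<close> to at most \<open>(1 - \<tau>\<^sub>2) d\<close> with probability at most
  \<open>2 ^ r * exp (d / 2 * (\<tau>\<^sub>2 + ln (1 - \<tau>\<^sub>2)))\<close>. Outside these events minimality of the
  reconstruction \<open>c\<close> gives
  \<open>(1 - \<tau>\<^sub>2) d \<parallel>c - x\<^sub>o\<parallel>\<^sup>2 \<le> \<parallel>A (c - x\<^sub>o)\<parallel>\<^sup>2 \<le> \<parallel>A (D (E x\<^sub>o) - x\<^sub>o)\<parallel>\<^sup>2 \<le> (1 + \<tau>\<^sub>1) d \<delta>\<^sup>2\<close>.\<close>

abbreviation std_normal :: "real measure" where
  "std_normal \<equiv> density lborel std_normal_density"

lemma prob_space_std_normal: "prob_space std_normal"
  by (rule prob_space_normal_density) simp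

lemma sets_std_normal[measurable_cong]: "sets std_normal = sets borel"
  by simp

lemma prob_space_gauss_matrix: "prob_space (gauss_matrix :: ('d::finite \<times> 'n::finite \<Rightarrow> real) measure)"
  unfolding gauss_matrix_def by (intro prob_space_PiM prob_space_std_normal)

lemma norm_mat_of_mult_sq:
  "(norm (mat_of f *v v))\<^sup>2 = (\<Sum>i\<in>UNIV. (\<Sum>j\<in>UNIV. f (i, j) * v $ j)\<^sup>2)"
  unfolding power2_norm_eq_inner inner_vec_def matrix_vector_mult_def mat_of_def
  by (simp add: power2_eq_square)

lemma borel_measurable_norm_mat_of_mult_sq[measurable]:
  "(\<lambda>f. (norm (mat_of f *v v))\<^sup>2) \<in> borel_measurable (gauss_matrix :: ('d::finite \<times> 'n::finite \<Rightarrow> real) measure)"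
  unfolding norm_mat_of_mult_sq gauss_matrix_def by measurable

lemma gauss_matrix_component_distr:
  "distr (gauss_matrix :: ('d::finite \<times> 'n::finite \<Rightarrow> real) measure) std_normal (\<lambda>f. f k) = std_normal"
  unfolding gauss_matrix_def by (rule distr_PiM_component) (auto intro: prob_space_std_normal)

lemma gauss_matrix_indep_components:
  "prob_space.indep_vars (gauss_matrix :: ('d::finite \<times> 'n::finite \<Rightarrow> real) measure)
     (\<lambda>_. std_normal) (\<lambda>k f. f k) UNIV"
proof -
  interpret prob_space "gauss_matrix :: ('d \<times> 'n \<Rightarrow> real) measure"
    by (rule prob_space_gauss_matrix)
  have "random_variable std_normal (\<lambda>f::'d \<times> 'n \<Rightarrow> real. f k)" for k
    unfolding gauss_matrix_def by (rule measurable_component_singleton) simp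
  then show ?thesis
    by (subst indep_vars_iff_distr_eq_PiM)
       (simp_all add: gauss_matrix_component_distr gauss_matrix_def[symmetric] distr_id
          restrict_UNIV[abs_def])
qed

lemma gauss_matrix_component_distributed:
  "distributed (gauss_matrix :: ('d::finite \<times> 'n::finite \<Rightarrow> real) measure) lborel (\<lambda>f. f k)
     (\<lambda>x. ennreal (std_normal_density x))"
proof -
  have "distr (gauss_matrix :: ('d \<times> 'n \<Rightarrow> real) measure) lborel (\<lambda>f. f k)
      = distr (gauss_matrix :: ('d \<times> 'n \<Rightarrow> real) measure) std_normal (\<lambda>f. f k)"
    by (rule distr_cong) auto
  then show ?thesis
    unfolding distributed_def by (simp add: gauss_matrix_component_distr) (simp add: gauss_matrix_def)
qed

lemma gauss_matrix_row_distributed: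
  fixes v :: "real^'n::finite" and i :: "'d::finite"
  assumes "v \<noteq> 0"
  shows "distributed (gauss_matrix :: ('d \<times> 'n \<Rightarrow> real) measure) lborel
           (\<lambda>f. \<Sum>j\<in>UNIV. f (i, j) * v $ j) (\<lambda>x. ennreal (normal_density 0 (norm v) x))"
proof -
  interpret prob_space "gauss_matrix :: ('d \<times> 'n \<Rightarrow> real) measure"
    by (rule prob_space_gauss_matrix)
  define J where "J = {j. v $ j \<noteq> 0}"
  have J: "finite J" "J \<noteq> {}"
    using assms unfolding J_def by (auto simp: vec_eq_iff)
  have "indep_vars (\<lambda>j. PiM {(i, j)} (\<lambda>_. std_normal)) (\<lambda>j f. restrict f {(i, j)}) J"
    using indep_vars_restrict[OF gauss_matrix_indep_components, of J "\<lambda>j. {(i, j)}"]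
    by (auto simp: disjoint_family_on_def)
  from indep_vars_compose2[OF this, where Y="\<lambda>j g. v $ j * g (i, j)" and N="\<lambda>_. borel"]
  have indep: "indep_vars (\<lambda>_. borel) (\<lambda>j f. v $ j * f (i, j)) J"
    by auto
  have "distributed (gauss_matrix :: ('d \<times> 'n \<Rightarrow> real) measure) lborel (\<lambda>f. v $ j * f (i, j))
        (\<lambda>x. ennreal (normal_density 0 \<bar>v $ j\<bar> x))" if "j \<in> J" for j
    using normal_density_affine[OF gauss_matrix_component_distributed, of "v $ j" 0] that
    by (simp add: J_def)
  then have "distributed (gauss_matrix :: ('d \<times> 'n \<Rightarrow> real) measure) lborel
      (\<lambda>f. \<Sum>j\<in>J. v $ j * f (i, j))
      (\<lambda>x. ennreal (normal_density (\<Sum>j\<in>J. 0) (sqrt (\<Sum>j\<in>J. \<bar>v $ j\<bar>\<^sup>2)) x))"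
    by (intro sum_indep_normal[OF J indep]) (auto simp: J_def)
  moreover have "(\<lambda>f. \<Sum>j\<in>J. v $ j * f (i, j)) = (\<lambda>f. \<Sum>j\<in>UNIV. f (i, j) * v $ j)"
    by (rule ext, rule sum.mono_neutral_cong_left) (auto simp: J_def)
  moreover have "sqrt (\<Sum>j\<in>J. \<bar>v $ j\<bar>\<^sup>2) = norm v"
    unfolding norm_vec_def L2_set_def
    by (rule arg_cong[where f=sqrt], rule sum.mono_neutral_cong_left) (auto simp: J_def)
  ultimately show ?thesis by simp
qed

lemma normal_density_mult_exp_sq:
  fixes \<sigma> t x :: real
  assumes "\<sigma> > 0" and "1 - 2 * t * \<sigma>\<^sup>2 > 0"
  shows "normal_density 0 \<sigma> x * exp (t * x\<^sup>2)
       = 1 / sqrt (1 - 2 * t * \<sigma>\<^sup>2) * normal_density 0 (\<sigma> / sqrt (1 - 2 * t * \<sigma>\<^sup>2)) x"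
proof -
  define a where "a = 1 - 2 * t * \<sigma>\<^sup>2"
  have a: "a > 0" using assms(2) by (simp add: a_def)
  have exponent: "-(x\<^sup>2) / (2 * \<sigma>\<^sup>2) + t * x\<^sup>2 = -(x - 0)\<^sup>2 / (2 * (\<sigma> / sqrt a)\<^sup>2)"
    using a assms(1) by (simp add: a_def power_divide field_simps)
  have factor: "sqrt a * sqrt (2 * pi * (\<sigma> / sqrt a)\<^sup>2) = sqrt (2 * pi * \<sigma>\<^sup>2)"
    using a by (simp add: power_divide real_sqrt_mult[symmetric])
  have "1 / sqrt a * normal_density 0 (\<sigma> / sqrt a) x
      = 1 / sqrt (2 * pi * \<sigma>\<^sup>2) * exp (-(x\<^sup>2) / (2 * \<sigma>\<^sup>2) + t * x\<^sup>2)"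
    unfolding normal_density_def exponent factor[symmetric] by simp
  also have "\<dots> = normal_density 0 \<sigma> x * exp (t * x\<^sup>2)"
    unfolding normal_density_def exp_add by simp
  finally show ?thesis unfolding a_def by simp
qed

lemma nn_integral_normal_density_exp_sq:
  fixes \<sigma> t :: real
  assumes "\<sigma> > 0" and "1 - 2 * t * \<sigma>\<^sup>2 > 0"
  shows "(\<integral>\<^sup>+x. ennreal (normal_density 0 \<sigma> x) * ennreal (exp (t * x\<^sup>2)) \<partial>lborel)
       = ennreal (1 / sqrt (1 - 2 * t * \<sigma>\<^sup>2))"
proof -
  define \<sigma>' where "\<sigma>' = \<sigma> / sqrt (1 - 2 * t * \<sigma>\<^sup>2)"
  have "\<sigma>' > 0" using assms by (simp add: \<sigma>'_def)
  have "(\<integral>\<^sup>+x. ennreal (normal_density 0 \<sigma> x) * ennreal (exp (t * x\<^sup>2)) \<partial>lborel)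
      = (\<integral>\<^sup>+x. ennreal (1 / sqrt (1 - 2 * t * \<sigma>\<^sup>2)) * ennreal (normal_density 0 \<sigma>' x) \<partial>lborel)"
    using assms
    by (intro nn_integral_cong)
       (simp add: ennreal_mult[symmetric] normal_density_mult_exp_sq \<sigma>'_def)
  also have "\<dots> = ennreal (1 / sqrt (1 - 2 * t * \<sigma>\<^sup>2)) * (\<integral>\<^sup>+x. ennreal (normal_density 0 \<sigma>' x) \<partial>lborel)"
    by (rule nn_integral_cmult) simp
  also have "(\<integral>\<^sup>+x. ennreal (normal_density 0 \<sigma>' x) \<partial>lborel) = 1"
    using \<open>\<sigma>' > 0\<close> by (subst nn_integral_eq_integral) auto
  finally show ?thesis by simp
qed

lemma inverse_sqrt_power_eq_exp:
  fixes b :: real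
  assumes "b > 0"
  shows "(1 / sqrt b) ^ k = exp (- real k / 2 * ln b)"
proof -
  have "1 / sqrt b = exp (- ln b / 2)"
    using assms by (simp add: ln_sqrt[symmetric] exp_minus inverse_eq_divide)
  then show ?thesis by (simp add: exp_of_nat_mult[symmetric])
qed

lemma gauss_matrix_indep_rows:
  fixes v :: "real^'n::finite"
  assumes [measurable]: "g \<in> borel_measurable borel"
  shows "prob_space.indep_vars (gauss_matrix :: ('d::finite \<times> 'n \<Rightarrow> real) measure) (\<lambda>_. borel)
           (\<lambda>i f. g (\<Sum>j\<in>UNIV. f (i, j) * v $ j)) UNIV"
proof -
  interpret prob_space "gauss_matrix :: ('d \<times> 'n \<Rightarrow> real) measure"
    by (rule prob_space_gauss_matrix)
  have rows: "indep_vars (\<lambda>i. PiM ({i} \<times> UNIV) (\<lambda>_. std_normal))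
      (\<lambda>i f. restrict f ({i} \<times> UNIV)) (UNIV :: 'd set)"
    using indep_vars_restrict[OF gauss_matrix_indep_components, of UNIV "\<lambda>i. {i} \<times> UNIV"]
    by (auto simp: disjoint_family_on_def)
  have "(\<lambda>h. g (\<Sum>j\<in>UNIV. h (i, j) * v $ j))
      \<in> borel_measurable (PiM ({i} \<times> UNIV) (\<lambda>_. std_normal))" for i :: 'd
  proof -
    have "(\<lambda>h. h (i, j)) \<in> borel_measurable (PiM ({i} \<times> UNIV) (\<lambda>_. std_normal))" for j
      using measurable_component_singleton[of "(i, j)" "{i} \<times> UNIV" "\<lambda>_. std_normal"]
      unfolding measurable_cong_sets[OF refl sets_std_normal] by simp
    then show ?thesis by measurable
  qed
  from indep_vars_compose2[OF rows this] show ?thesis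
    by (simp add: restrict_def)
qed

lemma gauss_matrix_mgf_norm_sq:
  fixes v :: "real^'n::finite" and t :: real
  assumes v: "v \<noteq> 0" and t: "1 - 2 * t * (norm v)\<^sup>2 > 0"
  shows "(\<integral>\<^sup>+f. ennreal (exp (t * (norm (mat_of f *v v))\<^sup>2))
            \<partial>(gauss_matrix :: ('d::finite \<times> 'n \<Rightarrow> real) measure))
       = ennreal (exp (- real CARD('d) / 2 * ln (1 - 2 * t * (norm v)\<^sup>2)))"
proof -
  interpret prob_space "gauss_matrix :: ('d \<times> 'n \<Rightarrow> real) measure"
    by (rule prob_space_gauss_matrix)
  define X where "X = (\<lambda>(i::'d) (f::'d \<times> 'n \<Rightarrow> real). exp (t * (\<Sum>j\<in>UNIV. f (i, j) * v $ j)\<^sup>2))"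
  have "indep_vars (\<lambda>_. borel) X UNIV"
    unfolding X_def by (rule gauss_matrix_indep_rows) simp
  from indep_vars_compose2[OF this, where Y="\<lambda>_ x. ennreal x" and N="\<lambda>_. borel"]
  have "(\<integral>\<^sup>+f. (\<Prod>i\<in>UNIV. ennreal (X i f)) \<partial>gauss_matrix)
      = (\<Prod>i\<in>UNIV. \<integral>\<^sup>+f. ennreal (X i f) \<partial>(gauss_matrix :: ('d \<times> 'n \<Rightarrow> real) measure))"
    by (intro indep_vars_nn_integral) auto
  moreover have "(\<integral>\<^sup>+f. ennreal (X i f) \<partial>(gauss_matrix :: ('d \<times> 'n \<Rightarrow> real) measure))
      = ennreal (1 / sqrt (1 - 2 * t * (norm v)\<^sup>2))" for i
    using distributed_nn_integral[OF gauss_matrix_row_distributed[OF v, of i],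
        of "\<lambda>x. ennreal (exp (t * x\<^sup>2))"]
      nn_integral_normal_density_exp_sq[of "norm v" t] v t
    by (simp add: X_def)
  moreover have "ennreal (exp (t * (norm (mat_of f *v v))\<^sup>2)) = (\<Prod>i\<in>UNIV. ennreal (X i f))" for f
    unfolding norm_mat_of_mult_sq X_def
    by (simp add: sum_distrib_left exp_sum prod_ennreal)
  ultimately show ?thesis
    using t by (simp add: ennreal_power inverse_sqrt_power_eq_exp)
qed

lemma gauss_matrix_norm_sq_ge_prob:
  fixes v :: "real^'n::finite" and s a :: real
  assumes v: "v \<noteq> 0" and "s > 0" and t: "1 - 2 * s * (norm v)\<^sup>2 > 0"
  defines "M \<equiv> gauss_matrix :: ('d::finite \<times> 'n \<Rightarrow> real) measure"
  shows "measure M {f \<in> space M. a \<le> (norm (mat_of f *v v))\<^sup>2}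
       \<le> exp (- s * a - real CARD('d) / 2 * ln (1 - 2 * s * (norm v)\<^sup>2))"
proof -
  interpret prob_space M unfolding M_def by (rule prob_space_gauss_matrix)
  have "emeasure M {f \<in> space M. a \<le> (norm (mat_of f *v v))\<^sup>2}
      \<le> ennreal (exp (- s * a)) *
        (\<integral>\<^sup>+f. ennreal (exp (s * (norm (mat_of f *v v))\<^sup>2)) * indicator (space M) f \<partial>M)"
    using \<open>s > 0\<close> by (intro Chernoff_ineq_nn_integral_ge) (auto simp: M_def)
  also have "(\<integral>\<^sup>+f. ennreal (exp (s * (norm (mat_of f *v v))\<^sup>2)) * indicator (space M) f \<partial>M)
      = (\<integral>\<^sup>+f. ennreal (exp (s * (norm (mat_of f *v v))\<^sup>2)) \<partial>M)"
    by (intro nn_integral_cong) simp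
  also have "\<dots> = ennreal (exp (- real CARD('d) / 2 * ln (1 - 2 * s * (norm v)\<^sup>2)))"
    unfolding M_def using gauss_matrix_mgf_norm_sq[OF v t, where 'd='d] by simp
  finally show ?thesis
    by (simp add: emeasure_eq_measure ennreal_mult[symmetric] exp_add[symmetric])
qed

lemma gauss_matrix_norm_sq_le_prob:
  fixes v :: "real^'n::finite" and s a :: real
  assumes v: "v \<noteq> 0" and "s > 0"
  defines "M \<equiv> gauss_matrix :: ('d::finite \<times> 'n \<Rightarrow> real) measure"
  shows "measure M {f \<in> space M. (norm (mat_of f *v v))\<^sup>2 \<le> a}
       \<le> exp (s * a - real CARD('d) / 2 * ln (1 + 2 * s * (norm v)\<^sup>2))"
proof -
  interpret prob_space M unfolding M_def by (rule prob_space_gauss_matrix)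
  have t: "1 - 2 * (- s) * (norm v)\<^sup>2 > 0"
    using \<open>s > 0\<close> by (simp add: add_pos_nonneg)
  have "emeasure M {f \<in> space M. (norm (mat_of f *v v))\<^sup>2 \<le> a}
      \<le> ennreal (exp (s * a)) *
        (\<integral>\<^sup>+f. ennreal (exp (- s * (norm (mat_of f *v v))\<^sup>2)) * indicator (space M) f \<partial>M)"
    using \<open>s > 0\<close> by (intro Chernoff_ineq_nn_integral_le) (auto simp: M_def)
  also have "(\<integral>\<^sup>+f. ennreal (exp (- s * (norm (mat_of f *v v))\<^sup>2)) * indicator (space M) f \<partial>M)
      = (\<integral>\<^sup>+f. ennreal (exp (- s * (norm (mat_of f *v v))\<^sup>2)) \<partial>M)"
    by (intro nn_integral_cong) simp
  also have "\<dots> = ennreal (exp (- real CARD('d) / 2 * ln (1 + 2 * s * (norm v)\<^sup>2)))"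
    unfolding M_def using gauss_matrix_mgf_norm_sq[OF v t, where 'd='d] by simp
  finally show ?thesis
    by (simp add: emeasure_eq_measure ennreal_mult[symmetric] exp_add[symmetric])
qed

lemma gauss_matrix_norm_sq_upper_tail:
  fixes v :: "real^'n::finite" and \<tau> :: real
  assumes "\<tau> > 0"
  defines "M \<equiv> gauss_matrix :: ('d::finite \<times> 'n \<Rightarrow> real) measure"
  shows "measure M {f \<in> space M. (1 + \<tau>) * real CARD('d) * (norm v)\<^sup>2 < (norm (mat_of f *v v))\<^sup>2}
       \<le> exp (- real CARD('d) / 2 * (\<tau> - ln (1 + \<tau>)))"
proof (cases "v = 0")
  case False
  interpret prob_space M unfolding M_def by (rule prob_space_gauss_matrix)
  define d where "d = real CARD('d)"
  define s where "s = \<tau> / (2 * (1 + \<tau>) * (norm v)\<^sup>2)"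
  have "s > 0"
    using False \<open>\<tau> > 0\<close> unfolding s_def by (simp add: divide_pos_pos)
  have sv: "2 * s * (norm v)\<^sup>2 = \<tau> / (1 + \<tau>)"
    using False \<open>\<tau> > 0\<close> unfolding s_def by (simp add: divide_simps)
  have "s * ((1 + \<tau>) * d * (norm v)\<^sup>2) = (2 * s * (norm v)\<^sup>2) * (1 + \<tau>) * d / 2"
    by (simp add: algebra_simps)
  also have "\<dots> = d / 2 * \<tau>"
    using \<open>\<tau> > 0\<close> unfolding sv by simp
  finally have exponent: "- s * ((1 + \<tau>) * d * (norm v)\<^sup>2) - d / 2 * ln (1 - 2 * s * (norm v)\<^sup>2)
      = - d / 2 * (\<tau> - ln (1 + \<tau>))"
    using \<open>\<tau> > 0\<close> unfolding sv by (simp add: ln_div field_simps)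
  have "measure M {f \<in> space M. (1 + \<tau>) * d * (norm v)\<^sup>2 < (norm (mat_of f *v v))\<^sup>2}
      \<le> measure M {f \<in> space M. (1 + \<tau>) * d * (norm v)\<^sup>2 \<le> (norm (mat_of f *v v))\<^sup>2}"
    by (rule finite_measure_mono) (auto simp: M_def)
  also have "\<dots> \<le> exp (- s * ((1 + \<tau>) * d * (norm v)\<^sup>2) - d / 2 * ln (1 - 2 * s * (norm v)\<^sup>2))"
    using gauss_matrix_norm_sq_ge_prob[OF False \<open>s > 0\<close>] \<open>\<tau> > 0\<close>
    unfolding M_def d_def sv by simp
  also have "\<dots> = exp (- d / 2 * (\<tau> - ln (1 + \<tau>)))"
    unfolding exponent ..
  finally show ?thesis unfolding d_def .
qed simp

lemma gauss_matrix_norm_sq_lower_tail: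
  fixes v :: "real^'n::finite" and \<tau> :: real
  assumes "v \<noteq> 0" and "0 < \<tau>" and "\<tau> < 1"
  defines "M \<equiv> gauss_matrix :: ('d::finite \<times> 'n \<Rightarrow> real) measure"
  shows "measure M {f \<in> space M. (norm (mat_of f *v v))\<^sup>2 \<le> (1 - \<tau>) * real CARD('d) * (norm v)\<^sup>2}
       \<le> exp (real CARD('d) / 2 * (\<tau> + ln (1 - \<tau>)))"
proof -
  define d where "d = real CARD('d)"
  define s where "s = \<tau> / (2 * (1 - \<tau>) * (norm v)\<^sup>2)"
  have s: "s > 0" "1 + 2 * s * (norm v)\<^sup>2 = 1 / (1 - \<tau>)"
    using assms by (auto simp: s_def field_simps)
  have "measure M {f \<in> space M. (norm (mat_of f *v v))\<^sup>2 \<le> (1 - \<tau>) * d * (norm v)\<^sup>2}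
      \<le> exp (s * ((1 - \<tau>) * d * (norm v)\<^sup>2) - d / 2 * ln (1 + 2 * s * (norm v)\<^sup>2))"
    using gauss_matrix_norm_sq_le_prob[OF assms(1) s(1)] unfolding M_def d_def .
  also have "s * ((1 - \<tau>) * d * (norm v)\<^sup>2) - d / 2 * ln (1 + 2 * s * (norm v)\<^sup>2)
      = d / 2 * (\<tau> + ln (1 - \<tau>))"
    using assms unfolding s(2) by (simp add: s_def ln_div field_simps)
  finally show ?thesis unfolding d_def .
qed

lemma codebook_subset: "\<forall>x\<in>Q. E x \<in> K \<Longrightarrow> codebook Q E D \<subseteq> D ` K"
  unfolding codebook_def by auto

lemma card_codebook_le:
  assumes "\<forall>x\<in>Q. E x \<in> K" and "finite K"
  shows "card (codebook Q E D) \<le> card K"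
proof -
  have "card (codebook Q E D) \<le> card (D ` K)"
    using assms by (intro card_mono finite_imageI codebook_subset)
  also have "\<dots> \<le> card K"
    by (rule card_image_le) (rule assms(2))
  finally show ?thesis .
qed

lemma norm_diff_le_distortion:
  fixes Q :: "'a::real_normed_vector set"
  assumes "bounded Q" and "finite (E ` Q)" and "x \<in> Q"
  shows "norm (x - D (E x)) \<le> distortion Q E D"
proof -
  obtain B where B: "\<forall>y\<in>Q. norm y \<le> B"
    using \<open>bounded Q\<close> bounded_iff by blast
  obtain B' where B': "\<forall>y\<in>D ` E ` Q. norm y \<le> B'"
    using finite_imp_bounded[of "D ` E ` Q"] \<open>finite (E ` Q)\<close> bounded_iff by blast
  have "norm (y - D (E y)) \<le> B + B'" if "y \<in> Q" for y
    using norm_triangle_ineq4[of y "D (E y)"] B B' that by fastforce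
  then have "bdd_above ((\<lambda>y. norm (y - D (E y))) ` Q)"
    by (intro bdd_aboveI2) blast
  then show ?thesis
    unfolding distortion_def using \<open>x \<in> Q\<close> by (rule cSUP_upper2) simp
qed

lemma csp_minimizer_mult_iff:
  "csp_minimizer A (A *v x) C c
     \<longleftrightarrow> c \<in> C \<and> (\<forall>c'\<in>C. (norm (A *v (c - x)))\<^sup>2 \<le> (norm (A *v (c' - x)))\<^sup>2)"
proof -
  have "norm (A *v x - A *v y) = norm (A *v (y - x))" for y
    by (simp add: matrix_vector_mult_diff_distrib norm_minus_commute)
  then show ?thesis unfolding csp_minimizer_def by simp
qed

lemma sets_csp_success_event:
  fixes C :: "(real^'n::finite) set"
  assumes "finite C"
  defines "M \<equiv> gauss_matrix :: ('d::finite \<times> 'n \<Rightarrow> real) measure"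
  shows "{f \<in> space M. \<forall>c. csp_minimizer (mat_of f) (mat_of f *v x) C c \<longrightarrow> norm (c - x) \<le> \<epsilon>}
         \<in> sets M"
proof -
  have [measurable]: "Measurable.pred M (\<lambda>f. (norm (mat_of f *v u))\<^sup>2 \<le> (norm (mat_of f *v w))\<^sup>2)"
    for u w :: "real^'n"
    unfolding pred_def M_def by (intro borel_measurable_le borel_measurable_norm_mat_of_mult_sq)
  have [measurable]: "Measurable.pred M (\<lambda>_. norm (c - x) \<le> \<epsilon>)" for c
    by simp
  show ?thesis
    unfolding csp_minimizer_mult_iff using assms(1)
    by (simp only: imp_conjL Ball_def[symmetric]) measurable
qed

lemma csp_minimizer_error_le:
  fixes A :: "real^'n::finite^'m::finite"
  assumes "csp_minimizer A (A *v x) C c" and "x' \<in> C" and "norm (x - x') \<le> \<delta>"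
    and "d > 0" and "0 \<le> 1 + \<tau>\<^sub>1" and "\<tau>\<^sub>2 < 1"
    and lower: "(1 - \<tau>\<^sub>2) * d * (norm (c - x))\<^sup>2 \<le> (norm (A *v (c - x)))\<^sup>2"
    and upper: "(norm (A *v (x' - x)))\<^sup>2 \<le> (1 + \<tau>\<^sub>1) * d * (norm (x' - x))\<^sup>2"
  shows "norm (c - x) \<le> \<delta> * sqrt ((1 + \<tau>\<^sub>1) / (1 - \<tau>\<^sub>2))"
proof -
  have "0 \<le> \<delta>" using assms(3) norm_ge_zero order_trans by blast
  have "(1 - \<tau>\<^sub>2) * d * (norm (c - x))\<^sup>2 \<le> (norm (A *v (c - x)))\<^sup>2"
    by (rule lower)
  also have "\<dots> \<le> (norm (A *v (x' - x)))\<^sup>2"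
    using assms(1,2) unfolding csp_minimizer_mult_iff by blast
  also have "\<dots> \<le> (1 + \<tau>\<^sub>1) * d * (norm (x' - x))\<^sup>2"
    by (rule upper)
  also have "\<dots> \<le> (1 + \<tau>\<^sub>1) * d * \<delta>\<^sup>2"
    using assms(3-5) by (intro mult_left_mono) (auto simp: norm_minus_commute power_mono)
  finally have "(1 - \<tau>\<^sub>2) * (norm (c - x))\<^sup>2 \<le> (1 + \<tau>\<^sub>1) * \<delta>\<^sup>2"
    using \<open>d > 0\<close> by (simp add: mult.commute mult.left_commute)
  then have "(norm (c - x))\<^sup>2 \<le> \<delta>\<^sup>2 * ((1 + \<tau>\<^sub>1) / (1 - \<tau>\<^sub>2))"
    using \<open>\<tau>\<^sub>2 < 1\<close> by (simp add: pos_le_divide_eq mult.commute)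
  also have "\<dots> = (\<delta> * sqrt ((1 + \<tau>\<^sub>1) / (1 - \<tau>\<^sub>2)))\<^sup>2"
    using assms(5,6) by (simp add: power_mult_distrib)
  finally have "(norm (c - x))\<^sup>2 \<le> (\<delta> * sqrt ((1 + \<tau>\<^sub>1) / (1 - \<tau>\<^sub>2)))\<^sup>2" .
  moreover have "0 \<le> \<delta> * sqrt ((1 + \<tau>\<^sub>1) / (1 - \<tau>\<^sub>2))"
    using \<open>0 \<le> \<delta>\<close> assms(5,6) by simp
  ultimately show ?thesis
    by (rule power2_le_imp_le)
qed

lemma gauss_matrix_union_lower_tail:
  fixes C :: "(real^'n::finite) set" and x :: "real^'n" and \<tau> :: real
  assumes "finite C" and "0 < \<tau>" and "\<tau> < 1"
  defines "M \<equiv> gauss_matrix :: ('d::finite \<times> 'n \<Rightarrow> real) measure"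
  shows "measure M (\<Union>c\<in>C - {x}. {f \<in> space M.
             (norm (mat_of f *v (c - x)))\<^sup>2 \<le> (1 - \<tau>) * real CARD('d) * (norm (c - x))\<^sup>2})
       \<le> card C * exp (real CARD('d) / 2 * (\<tau> + ln (1 - \<tau>)))"
proof -
  interpret prob_space M unfolding M_def by (rule prob_space_gauss_matrix)
  have "{f \<in> space M. (norm (mat_of f *v w))\<^sup>2 \<le> a} \<in> sets M" for w a
    using borel_measurable_norm_mat_of_mult_sq[of w] unfolding borel_measurable_iff_le M_def ..
  then have "measure M (\<Union>c\<in>C - {x}. {f \<in> space M.
             (norm (mat_of f *v (c - x)))\<^sup>2 \<le> (1 - \<tau>) * real CARD('d) * (norm (c - x))\<^sup>2})
      \<le> (\<Sum>c\<in>C - {x}. measure M {f \<in> space M.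
             (norm (mat_of f *v (c - x)))\<^sup>2 \<le> (1 - \<tau>) * real CARD('d) * (norm (c - x))\<^sup>2})"
    using \<open>finite C\<close> by (intro finite_measure_subadditive_finite) auto
  also have "\<dots> \<le> (\<Sum>c\<in>C - {x}. exp (real CARD('d) / 2 * (\<tau> + ln (1 - \<tau>))))"
    using assms(2,3) unfolding M_def by (intro sum_mono gauss_matrix_norm_sq_lower_tail) auto
  also have "\<dots> \<le> card C * exp (real CARD('d) / 2 * (\<tau> + ln (1 - \<tau>)))"
    using card_mono[of C "C - {x}"] \<open>finite C\<close> by (simp add: mult_right_mono)
  finally show ?thesis .
qed

lemma csp_success_prob_ge:
  fixes C :: "(real^'n::finite) set" and x x' :: "real^'n" and N :: nat
  assumes "finite C" and "card C \<le> N" and "x' \<in> C" and "norm (x - x') \<le> \<delta>"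
    and "\<tau>\<^sub>1 > 0" and "0 < \<tau>\<^sub>2" and "\<tau>\<^sub>2 < 1"
  defines "M \<equiv> gauss_matrix :: ('d::finite \<times> 'n \<Rightarrow> real) measure"
    and "d \<equiv> real CARD('d)"
  shows "measure M {f \<in> space M. \<forall>c. csp_minimizer (mat_of f) (mat_of f *v x) C c \<longrightarrow>
                     norm (c - x) \<le> \<delta> * sqrt ((1 + \<tau>\<^sub>1) / (1 - \<tau>\<^sub>2))}
       \<ge> 1 - N * exp (d / 2 * (\<tau>\<^sub>2 + ln (1 - \<tau>\<^sub>2))) - exp (- d / 2 * (\<tau>\<^sub>1 - ln (1 + \<tau>\<^sub>1)))"
    (is "measure M ?success \<ge> _")
proof -
  interpret prob_space M unfolding M_def by (rule prob_space_gauss_matrix)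
  define Y where "Y w f = (norm (mat_of f *v w))\<^sup>2" for w :: "real^'n" and f :: "'d \<times> 'n \<Rightarrow> real"
  have [measurable]: "Y w \<in> borel_measurable M" for w
    unfolding Y_def[abs_def] M_def by (rule borel_measurable_norm_mat_of_mult_sq)
  define shrunk where "shrunk = (\<Union>c\<in>C - {x}.
      {f \<in> space M. Y (c - x) f \<le> (1 - \<tau>\<^sub>2) * d * (norm (c - x))\<^sup>2})"
  define stretched where "stretched =
      {f \<in> space M. (1 + \<tau>\<^sub>1) * d * (norm (x' - x))\<^sup>2 < Y (x' - x) f}"
  have shrunk_sets[measurable]: "shrunk \<in> sets M"
    unfolding shrunk_def using \<open>finite C\<close> by (intro sets.finite_UN) measurable
  have stretched_sets[measurable]: "stretched \<in> sets M"
    unfolding stretched_def by measurable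
  have "measure M shrunk \<le> card C * exp (d / 2 * (\<tau>\<^sub>2 + ln (1 - \<tau>\<^sub>2)))"
    using gauss_matrix_union_lower_tail[OF \<open>finite C\<close> assms(6,7)]
    unfolding shrunk_def Y_def M_def d_def .
  also have "\<dots> \<le> N * exp (d / 2 * (\<tau>\<^sub>2 + ln (1 - \<tau>\<^sub>2)))"
    using assms(2) by (simp add: mult_right_mono)
  finally have shrunk: "measure M shrunk \<le> N * exp (d / 2 * (\<tau>\<^sub>2 + ln (1 - \<tau>\<^sub>2)))" .
  have stretched: "measure M stretched \<le> exp (- d / 2 * (\<tau>\<^sub>1 - ln (1 + \<tau>\<^sub>1)))"
    using gauss_matrix_norm_sq_upper_tail[OF \<open>\<tau>\<^sub>1 > 0\<close>] unfolding stretched_def Y_def M_def d_def .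
  have "space M - (shrunk \<union> stretched) \<subseteq> ?success"
  proof (safe)
    fix f c assume f: "f \<in> space M" "f \<notin> shrunk" "f \<notin> stretched"
      and c: "csp_minimizer (mat_of f) (mat_of f *v x) C c"
    then have "c \<in> C" by (simp add: csp_minimizer_def)
    then have "(1 - \<tau>\<^sub>2) * d * (norm (c - x))\<^sup>2 \<le> (norm (mat_of f *v (c - x)))\<^sup>2"
      using f by (cases "c = x") (auto simp: shrunk_def Y_def not_le intro: less_imp_le)
    with c f show "norm (c - x) \<le> \<delta> * sqrt ((1 + \<tau>\<^sub>1) / (1 - \<tau>\<^sub>2))"
      using assms(3-7) by (intro csp_minimizer_error_le[where d=d and x'=x'])
        (auto simp: stretched_def Y_def d_def)
  qed
  moreover have "?success \<in> sets M"
    unfolding M_def by (rule sets_csp_success_event[OF \<open>finite C\<close>])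
  ultimately have "measure M (space M - (shrunk \<union> stretched)) \<le> measure M ?success"
    by (intro finite_measure_mono)
  moreover have "measure M (space M - (shrunk \<union> stretched)) \<ge> 1 - measure M shrunk - measure M stretched"
    using measure_Un_le[OF shrunk_sets stretched_sets] by (simp add: prob_compl)
  ultimately show ?thesis
    using shrunk stretched by linarith
qed

theorem theorem1:
  fixes Q :: "(real^'n) set" and E :: "real^'n \<Rightarrow> nat" and D :: "nat \<Rightarrow> real^'n"
    and r :: nat and x\<^sub>o :: "real^'n" and \<tau>\<^sub>1 \<tau>\<^sub>2 :: real
  assumes "compact Q"
    and "\<forall>x\<in>Q. E x \<in> {1..2^r}"
    and "x\<^sub>o \<in> Q"
    and "\<tau>\<^sub>1 > 0" and "0 < \<tau>\<^sub>2" and "\<tau>\<^sub>2 < 1"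
  shows "let C = codebook Q E D; \<delta> = distortion Q E D; d = real CARD('d);
             M = (gauss_matrix :: ('d::finite \<times> 'n \<Rightarrow> real) measure);
             ev = {f \<in> space M. \<forall>c. csp_minimizer (mat_of f) (mat_of f *v x\<^sub>o) C c \<longrightarrow>
                     norm (c - x\<^sub>o) \<le> \<delta> * sqrt ((1 + \<tau>\<^sub>1) / (1 - \<tau>\<^sub>2))}
         in ev \<in> sets M \<and>
            measure M ev \<ge> 1 - 2^r * exp (d / 2 * (\<tau>\<^sub>2 + ln (1 - \<tau>\<^sub>2)))
                               - exp (- d / 2 * (\<tau>\<^sub>1 - ln (1 + \<tau>\<^sub>1)))"
proof -
  define C where "C = codebook Q E D"
  have "finite C"
    unfolding C_def using codebook_subset[OF assms(2)] by (rule finite_subset) simp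
  have "card C \<le> 2 ^ r"
    unfolding C_def using card_codebook_le[OF assms(2)] by simp
  have "D (E x\<^sub>o) \<in> C"
    unfolding C_def codebook_def using assms(3) by blast
  have "norm (x\<^sub>o - D (E x\<^sub>o)) \<le> distortion Q E D"
  proof (rule norm_diff_le_distortion)
    have "E ` Q \<subseteq> {1..2^r}" using assms(2) by blast
    then show "finite (E ` Q)" by (rule finite_subset) simp
  qed (use assms(1,3) compact_imp_bounded in auto)
  note success_prob = csp_success_prob_ge[where 'd='d,
      OF \<open>finite C\<close> \<open>card C \<le> 2 ^ r\<close> \<open>D (E x\<^sub>o) \<in> C\<close> this assms(4-6)]
  show ?thesis
    unfolding Let_def C_def[symmetric]
    using sets_csp_success_event[OF \<open>finite C\<close>] success_prob
    unfolding of_nat_power of_nat_numeral by (rule conjI)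
qed

end
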